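(* Let $(A,[\cdot,\cdot])$ be an Acaa-algebra over a field $\mathbb K$ of characteristic $0$, and let $e,f\in A$ be linearly independent. If $[e,f]\neq 0$, then $e,f,[e,f]$ are linearly independent.
   Context: An Acaa-algebra over a field $\mathbb K$ of characteristic $0$ is a $\mathbb K$-vector space $A$ with a bilinear product $[\cdot,\cdot]$ which is anticommutative, $[x,y]=-[y,x]$, and satisfies $[x_1,[x_2,x_3]]=[x_2,[x_3,x_1]]$ for all $x_1,x_2,x_3\in A$. *)

theory Defs
  imports Main "HOL.Vector_Spaces"
begin

definition bilinear_product ::
  "('k::field \<Rightarrow> 'v::ab_group_add \<Rightarrow> 'v) \<Rightarrow> ('v \<Rightarrow> 'v \<Rightarrow> 'v) \<Rightarrow> bool" where
  "bilinear_product scale br \<longleftrightarrow>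
     (\<forall>x y z. br (x + y) z = br x z + br y z) \<and>
     (\<forall>x y z. br x (y + z) = br x y + br x z) \<and>
     (\<forall>a x y. br (scale a x) y = scale a (br x y)) \<and>
     (\<forall>a x y. br x (scale a y) = scale a (br x y))"

definition acaa_algebra ::
  "('k::field \<Rightarrow> 'v::ab_group_add \<Rightarrow> 'v) \<Rightarrow> ('v \<Rightarrow> 'v \<Rightarrow> 'v) \<Rightarrow> bool" where
  "acaa_algebra scale br \<longleftrightarrow>
     vector_space scale \<and> bilinear_product scale br \<and>
     (\<forall>x y. br x y = - br y x) \<and>
     (\<forall>x1 x2 x3. br x1 (br x2 x3) = br x2 (br x3 x1))"

end

theory Submission
  imports Defs
begin

text \<open>Write \<open>g = [e, f]\<close>. The defining identities force \<open>[e, g] = 0\<close> and \<open>[f, g] = 0\<close>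
  (the first one needs \<open>2 \<noteq> 0\<close>). If \<open>g = a e + b f\<close>, bracketing with \<open>e\<close> gives \<open>b g = 0\<close>
  and bracketing with \<open>f\<close> gives \<open>a g = 0\<close>, so \<open>g = 0\<close>. Hence a nonzero \<open>g\<close> lies outside
  the span of \<open>e\<close> and \<open>f\<close>, which makes \<open>{e, f, g}\<close> independent whenever \<open>{e, f}\<close> is.\<close>

lemma (in module) span_pair_obtain:
  assumes "v \<in> span {x, y}"
  obtains a b where "v = scale a x + scale b y"
proof -
  obtain a where "v - scale a x \<in> span {y}"
    using assms span_breakdown_eq by blast
  then obtain b where "v - scale a x = scale b y"
    using span_singleton by auto
  then have "v = scale a x + scale b y"
    by (simp add: algebra_simps)
  then show thesis by (rule that)
qed

lemma (in vector_space) eq_neg_imp_zero: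
  fixes v :: 'b
  assumes "(2::'a) \<noteq> 0" and "v = - v"
  shows "v = 0"
proof -
  have "scale 2 v = v + v"
    using scale_left_distrib[of 1 1 v] by (simp add: one_add_one)
  also have "\<dots> = 0"
    using assms(2) by (metis add.right_inverse)
  finally show ?thesis
    using assms(1) by simp
qed

locale acaa =
  fixes scale :: "'k::field \<Rightarrow> 'v::ab_group_add \<Rightarrow> 'v"
    and br :: "'v \<Rightarrow> 'v \<Rightarrow> 'v"
  assumes acaa_algebra: "acaa_algebra scale br"
begin

sublocale vector_space scale
  using acaa_algebra unfolding acaa_algebra_def by blast

lemma bracket_anticomm: "br x y = - br y x"
  using acaa_algebra unfolding acaa_algebra_def by blast

lemma bracket_cyclic: "br x1 (br x2 x3) = br x2 (br x3 x1)"
  using acaa_algebra unfolding acaa_algebra_def by blast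

lemma bracket_add_right: "br x (y + z) = br x y + br x z"
  using acaa_algebra unfolding acaa_algebra_def bilinear_product_def by blast

lemma bracket_scale_right: "br x (scale a y) = scale a (br x y)"
  using acaa_algebra unfolding acaa_algebra_def bilinear_product_def by blast

lemma bracket_zero_right [simp]: "br x 0 = 0"
  using bracket_add_right[of x 0 0] by simp

lemma bracket_neg_right: "br x (- y) = - br x y"
  using bracket_add_right[of x y "- y"] by (simp add: eq_neg_iff_add_eq_0 add.commute)

lemma bracket_self [simp]:
  assumes "(2::'k) \<noteq> 0"
  shows "br x x = 0"
  using eq_neg_imp_zero[OF assms] bracket_anticomm[of x x] by blast

lemma bracket_bracket_left_self:
  assumes "(2::'k) \<noteq> 0"
  shows "br x (br x y) = 0"
proof (rule eq_neg_imp_zero[OF assms])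
  have "br x (br x y) = br x (br y x)"
    by (rule bracket_cyclic)
  also have "\<dots> = - br x (br x y)"
    using bracket_anticomm[of y x] bracket_neg_right by simp
  finally show "br x (br x y) = - br x (br x y)" .
qed

lemma bracket_bracket_right_self:
  assumes "(2::'k) \<noteq> 0"
  shows "br y (br x y) = 0"
  using bracket_cyclic[of y x y] assms by simp

lemma bracket_notin_span_pair:
  assumes "(2::'k) \<noteq> 0" and "br x y \<noteq> 0"
  shows "br x y \<notin> span {x, y}"
proof
  let ?g = "br x y"
  assume "?g \<in> span {x, y}"
  then obtain a b where g_eq: "?g = scale a x + scale b y"
    by (rule span_pair_obtain)
  have "0 = br x ?g"
    using bracket_bracket_left_self[OF assms(1)] by simp
  also have "\<dots> = br x (scale a x + scale b y)"
    using g_eq by (rule arg_cong)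
  also have "\<dots> = scale b ?g"
    by (simp add: bracket_add_right bracket_scale_right assms(1))
  finally have "b = 0"
    using assms(2) by simp
  have "0 = br y ?g"
    using bracket_bracket_right_self[OF assms(1)] by simp
  also have "\<dots> = br y (scale a x + scale b y)"
    using g_eq by (rule arg_cong)
  also have "\<dots> = - scale a ?g"
    by (simp add: bracket_add_right bracket_scale_right assms(1) bracket_anticomm[of y x])
  finally have "a = 0"
    using assms(2) by simp
  show False
    using g_eq \<open>a = 0\<close> \<open>b = 0\<close> assms(2) by simp
qed

end

theorem mainTheorem2:
  fixes scale :: "'k::field_char_0 \<Rightarrow> 'v::ab_group_add \<Rightarrow> 'v"
    and br :: "'v \<Rightarrow> 'v \<Rightarrow> 'v"
    and e f :: 'v
  assumes "acaa_algebra scale br"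
    and "e \<noteq> f" and "\<not> module.dependent scale {e, f}"
    and "br e f \<noteq> 0"
  shows "distinct [e, f, br e f] \<and> \<not> module.dependent scale {e, f, br e f}"
proof -
  interpret acaa scale br
    by (rule acaa.intro) (rule assms(1))
  have outside: "br e f \<notin> span {e, f}"
    using bracket_notin_span_pair[of e f] assms(4) by simp
  then have "br e f \<noteq> e" and "br e f \<noteq> f"
    using span_base[of _ "{e, f}"] by auto
  moreover have "independent {e, f, br e f}"
    using independent_insertI[OF outside assms(3)] by (simp add: insert_commute)
  ultimately show ?thesis
    using assms(2) by simp
qed

end
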